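(* Let $n\ge2$ and let $\eta$ be a unit vector in the algebraic linear span of $\{\xi_w:w\in\mathbb{F}_n^*\}$ in $F_n^2$. Then there are words $u,v\in\mathbb{F}_n^*$ such that $$L_uR_v\eta=L\xi_\varnothing=R\xi_\varnothing,$$ where $L$ is an isometry in $\mathcal{L}_n$ and $R$ is an isometry in $\mathcal{R}_n$ whose range is orthogonal to the range of $R_1$.
   Context: $F_n^2$ is the full Fock space over $\mathbb{C}^n$ with orthonormal basis $\{\xi_w:w\in\mathbb{F}_n^*\}$, where $\mathbb{F}_n^*$ is the unital free semigroup on letters $1,\dots,n$ with empty word $\varnothing$ ($\xi_\varnothing$ the vacuum vector). $L_i\xi_w=\xi_{iw}$, $R_i\xi_w=\xi_{wi}$; for $w=w_1\cdots w_k$, $L_w=L_{w_1}\cdots L_{w_k}$ and $R_w=R_{w_1}\cdots R_{w_k}$. $\mathcal{L}_n$ and $\mathcal{R}_n$ are the weakly closed unital algebras generated by $L_1,\dots,L_n$ and by $R_1,\dots,R_n$ respectively. *)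

theory Defs
  imports "HOL-Analysis.Analysis"
begin

(* Words of the free semigroup on letters 1..n are lists of naturals with letters in {1..n}.
   Vectors of the Fock space F_n^2 are coefficient functions (w \<mapsto> <x, xi_w>). *)

definition words :: "nat \<Rightarrow> nat list set" where
  "words n = {w. set w \<subseteq> {1..n}}"

definition fock :: "nat \<Rightarrow> (nat list \<Rightarrow> complex) set" where
  "fock n = {x. (\<forall>w. w \<notin> words n \<longrightarrow> x w = 0) \<and>
                 (\<lambda>w. (cmod (x w))\<^sup>2) summable_on UNIV}"

definition finner :: "(nat list \<Rightarrow> complex) \<Rightarrow> (nat list \<Rightarrow> complex) \<Rightarrow> complex" where
  "finner x y = (\<Sum>\<^sub>\<infinity>w. x w * cnj (y w))"

definition fnorm :: "(nat list \<Rightarrow> complex) \<Rightarrow> real" where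
  "fnorm x = sqrt (\<Sum>\<^sub>\<infinity>w. (cmod (x w))\<^sup>2)"

definition xi :: "nat list \<Rightarrow> nat list \<Rightarrow> complex" where
  "xi u = (\<lambda>w. if w = u then 1 else 0)"

definition fock_span :: "nat \<Rightarrow> (nat list \<Rightarrow> complex) set" where
  "fock_span n = {x. finite {w. x w \<noteq> 0} \<and> {w. x w \<noteq> 0} \<subseteq> words n}"

type_synonym op = "(nat list \<Rightarrow> complex) \<Rightarrow> (nat list \<Rightarrow> complex)"

text \<open>L_i xi_w = xi_{iw}, R_i xi_w = xi_{wi}\<close>
definition Li :: "nat \<Rightarrow> op" where
  "Li i x = (\<lambda>w. case w of [] \<Rightarrow> 0 | j # w' \<Rightarrow> if j = i then x w' else 0)"

definition Ri :: "nat \<Rightarrow> op" where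
  "Ri i x = (\<lambda>w. if w \<noteq> [] \<and> last w = i then x (butlast w) else 0)"

definition Lw :: "nat list \<Rightarrow> op" where
  "Lw u = foldr (\<lambda>i T. Li i \<circ> T) u id"

definition Rw :: "nat list \<Rightarrow> op" where
  "Rw u = foldr (\<lambda>i T. Ri i \<circ> T) u id"

definition bounded_op :: "nat \<Rightarrow> op \<Rightarrow> bool" where
  "bounded_op n T \<longleftrightarrow>
     (\<forall>x\<in>fock n. T x \<in> fock n) \<and>
     (\<forall>x\<in>fock n. \<forall>y\<in>fock n. T (\<lambda>w. x w + y w) = (\<lambda>w. T x w + T y w)) \<and>
     (\<forall>x\<in>fock n. \<forall>c. T (\<lambda>w. c * x w) = (\<lambda>w. c * T x w)) \<and>
     (\<exists>C. \<forall>x\<in>fock n. fnorm (T x) \<le> C * fnorm x)"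

definition isometry :: "nat \<Rightarrow> op \<Rightarrow> bool" where
  "isometry n T \<longleftrightarrow> bounded_op n T \<and> (\<forall>x\<in>fock n. fnorm (T x) = fnorm x)"

definition wot_closure :: "nat \<Rightarrow> op set \<Rightarrow> op set" where
  "wot_closure n S = {T. bounded_op n T \<and>
     (\<forall>P. finite P \<longrightarrow> P \<subseteq> fock n \<times> fock n \<longrightarrow> (\<forall>e>0. \<exists>A\<in>S.
        \<forall>(x, y)\<in>P. cmod (finner (T x) y - finner (A x) y) < e))}"

text \<open>unital algebras generated by L_1..L_n resp. R_1..R_n (= spans of L_w resp. R_w)\<close>
definition Lalg :: "nat \<Rightarrow> op set" where
  "Lalg n = {T. \<exists>F c. finite F \<and> F \<subseteq> words n \<and>
                 T = (\<lambda>x w. \<Sum>u\<in>F. c u * Lw u x w)}"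

definition Ralg :: "nat \<Rightarrow> op set" where
  "Ralg n = {T. \<exists>F c. finite F \<and> F \<subseteq> words n \<and>
                 T = (\<lambda>x w. \<Sum>u\<in>F. c u * Rw u x w)}"

definition Lcal :: "nat \<Rightarrow> op set" where
  "Lcal n = wot_closure n (Lalg n)"

definition Rcal :: "nat \<Rightarrow> op set" where
  "Rcal n = wot_closure n (Ralg n)"

definition orth_ranges :: "nat \<Rightarrow> op \<Rightarrow> op \<Rightarrow> bool" where
  "orth_ranges n S T \<longleftrightarrow> (\<forall>x\<in>fock n. \<forall>y\<in>fock n. finner (S x) (T y) = 0)"

end

theory Submission
  imports Defs
begin

(* Let S be the (finite) support of the unit vector eta, let M bound the
   lengths of the words in S, and let m = 2 1^M 2 be a "marker" word; m is a palindrome and,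
   because it is longer than every word of S, the decomposition of a word as  w m y  with
   w in S is unique (no shifted copy of m can start inside  w m).  Put
     L = sum_{w in S} eta_w L_{m w m}     and     R = sum_{w in S} eta_w R_{rev (m w m)}.
   Both send the vacuum to  sum_w eta_w xi_{m w m} = L_m R_m eta.  Each summand is a shift
   onto a set of words ({m w m y} resp. {y m w m}) and these sets are pairwise disjoint, so a
   unit-vector combination of them is an isometry; L, R lie in the algebras generated by the
   L_i resp. R_i, hence in their weak closures; and every word in the range of R ends in the
   letter 2, so that range is orthogonal to the range of R_1. *)

lemma Lw_Cons [simp]: "Lw (i # p) x = Li i (Lw p x)"
  by (simp add: Lw_def)

lemma Rw_Cons [simp]: "Rw (i # q) x = Ri i (Rw q x)"
  by (simp add: Rw_def)

lemma Lw_Nil [simp]: "Lw [] x = x"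
  by (simp add: Lw_def)

lemma Rw_Nil [simp]: "Rw [] x = x"
  by (simp add: Rw_def)

lemma Lw_prefix: "Lw p x (p @ y) = x y"
  by (induction p) (simp_all add: Li_def)

lemma Lw_outside: "(\<And>y. z \<noteq> p @ y) \<Longrightarrow> Lw p x z = 0"
  by (induction p arbitrary: z) (auto simp: Li_def split: list.split)

lemma Rw_suffix: "Rw q x (y @ rev q) = x y"
  by (induction q arbitrary: y) (simp_all add: Ri_def butlast_append)

lemma Rw_outside: "(\<And>y. z \<noteq> y @ rev q) \<Longrightarrow> Rw q x z = 0"
proof (induction q arbitrary: z)
  case (Cons i q)
  show ?case
  proof (cases "z \<noteq> [] \<and> last z = i")
    case True
    then have "z = butlast z @ [i]" by (metis append_butlast_last_id)
    then have "butlast z \<noteq> y @ rev q" for y using Cons.prems[of y] by auto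
    then show ?thesis using True Cons.IH by (simp add: Ri_def)
  qed (auto simp: Ri_def)
qed blast

locale shift_family =
  fixes S :: "nat list set"
    and f :: "nat list \<Rightarrow> nat list \<Rightarrow> nat list"
    and P :: "nat list \<Rightarrow> op"
  assumes finite_S: "finite S"
    and inj_f: "w \<in> S \<Longrightarrow> inj (f w)"
    and disjoint_ranges: "w \<in> S \<Longrightarrow> w' \<in> S \<Longrightarrow> f w y = f w' y' \<Longrightarrow> w = w'"
    and P_on_range: "w \<in> S \<Longrightarrow> P w x (f w y) = x y"
    and P_off_range: "w \<in> S \<Longrightarrow> z \<notin> range (f w) \<Longrightarrow> P w x z = 0"
begin

lemma combination_on_range:
  assumes "w \<in> S"
  shows "(\<Sum>w'\<in>S. a w' * P w' x (f w y)) = a w * x y"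
proof -
  have "a w' * P w' x (f w y) = (if w' = w then a w * x y else 0)" if "w' \<in> S" for w'
  proof (cases "w' = w")
    case False
    then have "f w y \<notin> range (f w')"
      using disjoint_ranges[OF that assms] by (metis rangeE)
    then show ?thesis using P_off_range[OF that] False by simp
  qed (simp add: P_on_range[OF assms])
  then show ?thesis
    using finite_S assms by (simp add: sum.delta)
qed

lemma combination_off_ranges:
  assumes "\<And>w. w \<in> S \<Longrightarrow> z \<notin> range (f w)"
  shows "(\<Sum>w\<in>S. a w * P w x z) = 0"
  using assms P_off_range by (simp add: sum.neutral)

(* Each shift is given pointwise by the inverse of f w; in particular it is linear. *)
lemma P_explicit:
  assumes "w \<in> S"
  shows "P w x z = (if z \<in> range (f w) then x (inv (f w) z) else 0)"
  using P_on_range[OF assms] P_off_range[OF assms] inj_f[OF assms] by auto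

(* Pythagoras for orthogonal ranges: the squared norm of the combination is the squared norm
   of x times the squared norm of the coefficient vector. *)
lemma combination_norm_has_sum:
  assumes x: "((\<lambda>y. (cmod (x y))\<^sup>2) has_sum s) UNIV"
  shows "((\<lambda>z. (cmod (\<Sum>w\<in>S. a w * P w x z))\<^sup>2) has_sum (\<Sum>w\<in>S. (cmod (a w))\<^sup>2) * s) UNIV"
proof -
  define h where "h z = (cmod (\<Sum>w\<in>S. a w * P w x z))\<^sup>2" for z
  have piece: "(h has_sum (cmod (a w))\<^sup>2 * s) (range (f w))" if "w \<in> S" for w
  proof -
    have "h \<circ> f w = (\<lambda>y. (cmod (a w))\<^sup>2 * (cmod (x y))\<^sup>2)"
      using combination_on_range[OF that] by (auto simp: h_def norm_mult power_mult_distrib)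
    then show ?thesis
      using has_sum_cmult_right[OF x] by (subst has_sum_reindex[OF inj_f[OF that]]) simp
  qed
  have "(h has_sum (\<Sum>w\<in>S'. (cmod (a w))\<^sup>2 * s)) (\<Union>w\<in>S'. range (f w))"
    if "finite S'" "S' \<subseteq> S" for S'
    using that
  proof (induction S' rule: finite_induct)
    case (insert w S')
    have "range (f w) \<inter> (\<Union>w'\<in>S'. range (f w')) = {}"
      using insert disjoint_ranges by blast
    from has_sum_Un_disjoint[OF piece insert.IH this] insert show ?case
      by simp
  qed simp
  then have "(h has_sum (\<Sum>w\<in>S. (cmod (a w))\<^sup>2) * s) (\<Union>w\<in>S. range (f w))"
    using finite_S by (simp add: sum_distrib_right)
  also have "?this \<longleftrightarrow> (h has_sum (\<Sum>w\<in>S. (cmod (a w))\<^sup>2) * s) UNIV"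
    by (rule has_sum_cong_neutral) (auto simp: h_def combination_off_ranges)
  finally show ?thesis unfolding h_def .
qed

lemma combination_isometry:
  assumes words: "\<And>w y. w \<in> S \<Longrightarrow> y \<in> words n \<Longrightarrow> f w y \<in> words n"
    and unit: "(\<Sum>w\<in>S. (cmod (a w))\<^sup>2) = 1"
  shows "isometry n (\<lambda>x z. \<Sum>w\<in>S. a w * P w x z)" (is "isometry n ?T")
proof -
  have norm: "((\<lambda>z. (cmod (?T x z))\<^sup>2) has_sum (\<Sum>\<^sub>\<infinity>y. (cmod (x y))\<^sup>2)) UNIV"
    if "x \<in> fock n" for x
  proof -
    have "((\<lambda>y. (cmod (x y))\<^sup>2) has_sum (\<Sum>\<^sub>\<infinity>y. (cmod (x y))\<^sup>2)) UNIV"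
      using that by (simp add: fock_def has_sum_infsum)
    from combination_norm_has_sum[OF this, of a] show ?thesis by (simp add: unit)
  qed
  have vanish: "?T x z = 0" if "x \<in> fock n" "z \<notin> words n" for x z
  proof -
    have "P w x z = 0" if "w \<in> S" for w
    proof (cases "z \<in> range (f w)")
      case True
      then obtain y where "z = f w y" by blast
      moreover have "y \<notin> words n"
        using words \<open>w \<in> S\<close> \<open>z \<notin> words n\<close> calculation by blast
      ultimately show ?thesis
        using P_on_range[OF \<open>w \<in> S\<close>] \<open>x \<in> fock n\<close> by (simp add: fock_def)
    qed (use P_off_range that in auto)
    then show ?thesis by simp
  qed
  have "?T x \<in> fock n" if "x \<in> fock n" for x
    using vanish norm that by (auto simp: fock_def dest: has_sum_imp_summable)
  moreover have "fnorm (?T x) = fnorm x" if "x \<in> fock n" for x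
    using infsumI[OF norm[OF that]] by (simp add: fnorm_def)
  moreover have "?T (\<lambda>z. x z + y z) = (\<lambda>z. ?T x z + ?T y z)" for x y
    unfolding sum.distrib[symmetric] by (intro ext sum.cong) (simp_all add: P_explicit distrib_left)
  moreover have "?T (\<lambda>z. c * x z) = (\<lambda>z. c * ?T x z)" for x c
    unfolding sum_distrib_left by (intro ext sum.cong) (simp_all add: P_explicit)
  ultimately show ?thesis
    unfolding isometry_def bounded_op_def by (auto intro: exI[of _ 1])
qed

end

lemma bounded_in_wot_closure:
  assumes "A \<in> S" and "bounded_op n A"
  shows "A \<in> wot_closure n S"
  unfolding wot_closure_def using assms by (auto intro!: bexI[of _ A])

lemma Lw_combination_in_Lalg:
  assumes "finite S" "inj_on g S" "g ` S \<subseteq> words n"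
  shows "(\<lambda>x z. \<Sum>w\<in>S. a w * Lw (g w) x z) \<in> Lalg n"
proof -
  have "(\<lambda>x z. \<Sum>w\<in>S. a w * Lw (g w) x z) = (\<lambda>x z. \<Sum>p\<in>g ` S. a (inv_into S g p) * Lw p x z)"
    using assms(2) by (simp add: sum.reindex)
  then show ?thesis
    unfolding Lalg_def using assms(1,3)
    by (intro CollectI exI[of _ "g ` S"] exI[of _ "\<lambda>p. a (inv_into S g p)"]) simp
qed

lemma Rw_combination_in_Ralg:
  assumes "finite S" "inj_on g S" "g ` S \<subseteq> words n"
  shows "(\<lambda>x z. \<Sum>w\<in>S. a w * Rw (g w) x z) \<in> Ralg n"
proof -
  have "(\<lambda>x z. \<Sum>w\<in>S. a w * Rw (g w) x z) = (\<lambda>x z. \<Sum>p\<in>g ` S. a (inv_into S g p) * Rw p x z)"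
    using assms(2) by (simp add: sum.reindex)
  then show ?thesis
    unfolding Ralg_def using assms(1,3)
    by (intro CollectI exI[of _ "g ` S"] exI[of _ "\<lambda>p. a (inv_into S g p)"]) simp
qed

lemma Lw_vacuum: "Lw p (xi []) = xi p"
proof
  fix z show "Lw p (xi []) z = xi p z"
  proof (cases "\<exists>y. z = p @ y")
    case True
    then obtain y where z: "z = p @ y" by blast
    have "xi p z = xi [] y" by (simp add: z xi_def)
    then show ?thesis by (simp add: z Lw_prefix)
  next
    case False
    then have "z \<noteq> p" by (metis append_Nil2)
    with False show ?thesis by (simp add: Lw_outside xi_def)
  qed
qed

lemma Rw_vacuum: "Rw (rev p) (xi []) = xi p"
proof
  fix z show "Rw (rev p) (xi []) z = xi p z"
  proof (cases "\<exists>y. z = y @ p")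
    case True
    then obtain y where z: "z = y @ p" by blast
    have "xi p z = xi [] y" by (simp add: z xi_def)
    then show ?thesis using Rw_suffix[of "rev p" "xi []" y] by (simp add: z)
  next
    case False
    then have "z \<noteq> p" by (metis append_Nil)
    with False show ?thesis using Rw_outside[of z "rev p" "xi []"] by (auto simp: xi_def)
  qed
qed

lemma Lw_Rw_two_sided:
  "Lw p (Rw (rev q) x) (p @ y @ q) = x y"
  "(\<And>y. z \<noteq> p @ y @ q) \<Longrightarrow> Lw p (Rw (rev q) x) z = 0"
proof -
  show "Lw p (Rw (rev q) x) (p @ y @ q) = x y"
    using Rw_suffix[of "rev q" x y] by (simp add: Lw_prefix)
  assume none: "\<And>y. z \<noteq> p @ y @ q"
  show "Lw p (Rw (rev q) x) z = 0"
  proof (cases "\<exists>y. z = p @ y")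
    case True
    then obtain y where z: "z = p @ y" by blast
    have "Rw (rev q) x y = 0"
      by (rule Rw_outside) (use none z in auto)
    then show ?thesis by (simp add: z Lw_prefix)
  qed (simp add: Lw_outside)
qed

lemma Lw_Rw_finite_support:
  assumes "finite S" "\<And>w. w \<notin> S \<Longrightarrow> x w = 0"
  shows "Lw p (Rw (rev q) x) = (\<lambda>z. \<Sum>w\<in>S. x w * xi (p @ w @ q) z)"
proof
  fix z
  show "Lw p (Rw (rev q) x) z = (\<Sum>w\<in>S. x w * xi (p @ w @ q) z)"
  proof (cases "\<exists>y. z = p @ y @ q")
    case True
    then obtain y where z: "z = p @ y @ q" by blast
    have "(\<Sum>w\<in>S. x w * xi (p @ w @ q) z) = (\<Sum>w\<in>S. if w = y then x y else 0)"
      by (rule sum.cong) (auto simp: z xi_def)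
    also have "\<dots> = x y"
      using assms by (simp add: sum.delta)
    finally show ?thesis
      using Lw_Rw_two_sided(1) z by simp
  next
    case False
    then show ?thesis
      using Lw_Rw_two_sided(2)[of z p q x] by (auto simp: xi_def intro!: sum.neutral)
  qed
qed

definition marker :: "nat \<Rightarrow> nat list" where
  "marker M = 2 # replicate M 1 @ [2]"

lemma rev_marker [simp]: "rev (marker M) = marker M"
  by (simp add: marker_def)

lemma marker_in_words: "n \<ge> 2 \<Longrightarrow> marker M \<in> words n"
  by (auto simp: marker_def words_def)

lemma marker_no_overlap:
  assumes "us \<noteq> []" "length us \<le> M"
  shows "marker M @ y \<noteq> us @ marker M @ y'"
proof
  assume eq: "marker M @ y = us @ marker M @ y'"
  obtain c us' where us: "us = c # us'" using assms(1) by (cases us) auto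
  then have "(replicate M 1 @ 2 # y) ! length us' = (us' @ 2 # replicate M 1 @ 2 # y') ! length us'"
    using eq by (simp add: marker_def)
  with assms(2) us show False by (simp add: nth_append)
qed

lemma marker_separates:
  assumes "length w \<le> M" "length w' \<le> M"
    and eq: "w @ marker M @ y = w' @ marker M @ y'"
  shows "w = w'"
proof -
  obtain us where "(w = w' @ us \<and> us @ marker M @ y = marker M @ y') \<or>
                   (w @ us = w' \<and> marker M @ y = us @ marker M @ y')"
    using eq unfolding append_eq_append_conv2 by blast
  then show ?thesis
    using marker_no_overlap[of us M] assms(1,2) by (cases "us = []") (auto, metis)
qed

definition support :: "(nat list \<Rightarrow> complex) \<Rightarrow> nat list set" where
  "support \<eta> = {w. \<eta> w \<noteq> 0}"

definition marked :: "nat \<Rightarrow> nat list \<Rightarrow> nat list" where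
  "marked M w = marker M @ w @ marker M"

definition left_op :: "nat \<Rightarrow> (nat list \<Rightarrow> complex) \<Rightarrow> op" where
  "left_op M \<eta> = (\<lambda>x z. \<Sum>w\<in>support \<eta>. \<eta> w * Lw (marked M w) x z)"

definition right_op :: "nat \<Rightarrow> (nat list \<Rightarrow> complex) \<Rightarrow> op" where
  "right_op M \<eta> = (\<lambda>x z. \<Sum>w\<in>support \<eta>. \<eta> w * Rw (rev (marked M w)) x z)"

lemma support_finite: "\<eta> \<in> fock_span n \<Longrightarrow> finite (support \<eta>)"
  by (simp add: fock_span_def support_def)

lemma support_words: "\<eta> \<in> fock_span n \<Longrightarrow> support \<eta> \<subseteq> words n"
  by (simp add: fock_span_def support_def)

lemma support_unit_sum:
  assumes "\<eta> \<in> fock_span n" "fnorm \<eta> = 1"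
  shows "(\<Sum>w\<in>support \<eta>. (cmod (\<eta> w))\<^sup>2) = 1"
proof -
  have "(\<Sum>\<^sub>\<infinity>w. (cmod (\<eta> w))\<^sup>2) = (\<Sum>\<^sub>\<infinity>w\<in>support \<eta>. (cmod (\<eta> w))\<^sup>2)"
    by (rule infsum_cong_neutral) (auto simp: support_def)
  also have "\<dots> = (\<Sum>w\<in>support \<eta>. (cmod (\<eta> w))\<^sup>2)"
    using support_finite[OF assms(1)] by simp
  finally show ?thesis
    using assms(2) by (simp add: fnorm_def)
qed

lemma words_append [simp]: "u @ v \<in> words n \<longleftrightarrow> u \<in> words n \<and> v \<in> words n"
  by (auto simp: words_def)

lemma rev_in_words [simp]: "rev w \<in> words n \<longleftrightarrow> w \<in> words n"
  by (simp add: words_def)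

lemma marked_in_words: "n \<ge> 2 \<Longrightarrow> w \<in> words n \<Longrightarrow> marked M w \<in> words n"
  using marker_in_words[of n M] by (simp add: marked_def)

lemma marked_inj: "inj (marked M)"
  by (simp add: inj_def marked_def)

lemma left_op_isometry:
  assumes "n \<ge> 2" "\<eta> \<in> fock_span n" "fnorm \<eta> = 1"
    and short: "\<And>w. w \<in> support \<eta> \<Longrightarrow> length w \<le> M"
  shows "isometry n (left_op M \<eta>)"
proof -
  interpret shift_family "support \<eta>" "\<lambda>w y. marked M w @ y" "\<lambda>w. Lw (marked M w)"
  proof
    fix w w' y y'
    assume "w \<in> support \<eta>" "w' \<in> support \<eta>" "marked M w @ y = marked M w' @ y'"
    then show "w = w'"
      using short marker_separates[of w M w' y y'] by (simp add: marked_def)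
  next
    fix w x z
    assume "z \<notin> range (\<lambda>y. marked M w @ y)"
    then show "Lw (marked M w) x z = 0" by (intro Lw_outside) auto
  qed (auto simp: support_finite[OF assms(2)] Lw_prefix intro: injI)
  show ?thesis
    unfolding left_op_def
    using support_words[OF assms(2)] marked_in_words[OF assms(1)] support_unit_sum[OF assms(2,3)]
    by (intro combination_isometry) auto
qed

(* R is an isometry: after reversal, y m w m = y' m w' m gives rev w m rev y = rev w' m rev y'. *)
lemma right_op_isometry:
  assumes "n \<ge> 2" "\<eta> \<in> fock_span n" "fnorm \<eta> = 1"
    and short: "\<And>w. w \<in> support \<eta> \<Longrightarrow> length w \<le> M"
  shows "isometry n (right_op M \<eta>)"
proof -
  interpret shift_family "support \<eta>" "\<lambda>w y. y @ marked M w" "\<lambda>w. Rw (rev (marked M w))"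
  proof
    fix w w' y y'
    assume "w \<in> support \<eta>" "w' \<in> support \<eta>" and eq: "y @ marked M w = y' @ marked M w'"
    have "rev (y @ marked M w) = rev (y' @ marked M w')" by (simp only: eq)
    then have "rev w @ marker M @ rev y = rev w' @ marker M @ rev y'"
      by (simp add: marked_def)
    then show "w = w'"
      using short marker_separates[of "rev w" M "rev w'"] \<open>w \<in> _\<close> \<open>w' \<in> _\<close> by simp
  next
    fix w x y show "Rw (rev (marked M w)) x (y @ marked M w) = x y"
      using Rw_suffix[of "rev (marked M w)" x y] by simp
  next
    fix w x z
    assume "z \<notin> range (\<lambda>y. y @ marked M w)"
    then show "Rw (rev (marked M w)) x z = 0" by (intro Rw_outside) auto
  qed (auto simp: support_finite[OF assms(2)] intro: injI)
  show ?thesis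
    unfolding right_op_def
    using support_words[OF assms(2)] marked_in_words[OF assms(1)] support_unit_sum[OF assms(2,3)]
    by (intro combination_isometry) auto
qed

lemma left_op_in_Lcal:
  assumes "n \<ge> 2" "\<eta> \<in> fock_span n" "isometry n (left_op M \<eta>)"
  shows "left_op M \<eta> \<in> Lcal n"
  unfolding Lcal_def
proof (rule bounded_in_wot_closure)
  show "left_op M \<eta> \<in> Lalg n"
    unfolding left_op_def
    using support_finite[OF assms(2)] support_words[OF assms(2)] marked_in_words[OF assms(1)]
    by (intro Lw_combination_in_Lalg) (auto intro: inj_on_subset[OF marked_inj])
qed (use assms(3) in \<open>simp add: isometry_def\<close>)

lemma right_op_in_Rcal:
  assumes "n \<ge> 2" "\<eta> \<in> fock_span n" "isometry n (right_op M \<eta>)"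
  shows "right_op M \<eta> \<in> Rcal n"
  unfolding Rcal_def
proof (rule bounded_in_wot_closure)
  show "right_op M \<eta> \<in> Ralg n"
    unfolding right_op_def
    using support_finite[OF assms(2)] support_words[OF assms(2)] marked_in_words[OF assms(1)]
    by (intro Rw_combination_in_Ralg) (auto simp: inj_on_def marked_def marker_in_words[OF assms(1)])
qed (use assms(3) in \<open>simp add: isometry_def\<close>)

(* Every word in the range of R ends with the letter 2, the range of R_1 consists of words
   ending with 1, so the ranges are orthogonal. *)
lemma right_op_orth_R1: "orth_ranges n (right_op M \<eta>) (Ri 1)"
  unfolding orth_ranges_def finner_def
proof (intro ballI)
  fix x y :: "nat list \<Rightarrow> complex"
  have vanish: "right_op M \<eta> x z * cnj (Ri 1 y z) = 0" for z
  proof (cases "z \<noteq> [] \<and> last z = 1")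
    case True
    have "z \<noteq> y' @ marked M w" for y' w
      using True by (auto simp: marked_def marker_def)
    then have "Rw (rev (marked M w)) x z = 0" for w
      by (intro Rw_outside) simp
    then show ?thesis by (simp add: right_op_def)
  qed (auto simp: Ri_def)
  show "(\<Sum>\<^sub>\<infinity>z. right_op M \<eta> x z * cnj (Ri 1 y z)) = 0"
    by (simp only: vanish infsum_0_simp)
qed

(* The common value  sum_w eta_w xi_{m w m}  of L xi_0, R xi_0 and L_m R_m eta. *)
definition marked_vector :: "nat \<Rightarrow> (nat list \<Rightarrow> complex) \<Rightarrow> nat list \<Rightarrow> complex" where
  "marked_vector M \<eta> = (\<lambda>z. \<Sum>w\<in>support \<eta>. \<eta> w * xi (marked M w) z)"

lemma left_op_vacuum: "left_op M \<eta> (xi []) = marked_vector M \<eta>"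
  by (simp add: left_op_def marked_vector_def Lw_vacuum)

lemma right_op_vacuum: "right_op M \<eta> (xi []) = marked_vector M \<eta>"
  by (simp add: right_op_def marked_vector_def Rw_vacuum)

lemma marker_shifts:
  assumes "\<eta> \<in> fock_span n"
  shows "Lw (marker M) (Rw (marker M) \<eta>) = marked_vector M \<eta>"
  using Lw_Rw_finite_support[OF support_finite[OF assms], of \<eta> "marker M" "marker M"]
  by (simp add: marked_vector_def marked_def support_def)

theorem lemma4p3:
  fixes n :: nat and \<eta> :: "nat list \<Rightarrow> complex"
  assumes "n \<ge> 2"
    and "\<eta> \<in> fock_span n"
    and "fnorm \<eta> = 1"
  shows "\<exists>u v L R. u \<in> words n \<and> v \<in> words n \<and>
           L \<in> Lcal n \<and> isometry n L \<and>
           R \<in> Rcal n \<and> isometry n R \<and> orth_ranges n R (Ri 1) \<and>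
           Lw u (Rw v \<eta>) = L (xi []) \<and> L (xi []) = R (xi [])"
proof -
  define M where "M = Max (insert 0 (length ` support \<eta>))"
  have short: "length w \<le> M" if "w \<in> support \<eta>" for w
    unfolding M_def using support_finite[OF assms(2)] that by (intro Max_ge) auto
  have "isometry n (left_op M \<eta>)" and "isometry n (right_op M \<eta>)"
    using left_op_isometry right_op_isometry assms short by blast+
  then show ?thesis
    using marker_in_words[OF assms(1)] left_op_in_Lcal right_op_in_Rcal assms(1,2)
      right_op_orth_R1 marker_shifts[OF assms(2)] left_op_vacuum right_op_vacuum
    by (intro exI[of _ "marker M"] exI[of _ "left_op M \<eta>"] exI[of _ "right_op M \<eta>"]) simp
qed

end
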